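(* Let $(A,\varphi,\phi_A,[\cdot,\cdot]_A,a_A,K,\langle\cdot,\cdot\rangle)$ be a para-Kähler hom-Lie algebroid, $\Omega(X,Y)=\langle(\phi_A\circ K)X,Y\rangle$, $\nabla$ the hom-Levi-Civita connection and $\nabla^a$ the connection determined by $\Omega(\nabla^{a}_XY,\phi_A(Z))=a_A(\phi_A(X))\Omega(Y,Z)-\Omega(\phi_A(Y),[X,Z]_A)$ for all $Z\in\Gamma(A)$. Then $\nabla_XY=\nabla^a_XY$ for all $X,Y\in\Gamma(A^1)$, and $\nabla_{\bar X}\bar Y=\nabla^a_{\bar X}\bar Y$ for all $\bar X,\bar Y\in\Gamma(A^{-1})$.
   Context: Standing conventions. $M$ is a smooth manifold, $\varphi:M\to M$ a diffeomorphism, $\varphi^*f=f\circ\varphi$. A hom-bundle $(A\to M,\varphi,\phi_A)$ is a vector bundle $A\to M$ together with an invertible $\mathbb R$-linear map $\phi_A:\Gamma(A)\to\Gamma(A)$ with $\phi_A(fX)=\varphi^*(f)\phi_A(X)$. $\varphi^!TM$ is the pullback bundle; its sections are identified with $\mathbb R$-linear maps $D:C^\infty(M)\to C^\infty(M)$ with $D(fg)=D(f)\varphi^*(g)+\varphi^*(f)D(g)$. A hom-Lie algebroid $(A,\varphi,\phi_A,[\cdot,\cdot]_A,a_A)$ consists of a hom-bundle, a skew-symmetric $\mathbb R$-bilinear bracket on $\Gamma(A)$ with $\phi_A[X,Y]_A=[\phi_A X,\phi_A Y]_A$ and $[\phi_A(X),[Y,Z]_A]_A+[\phi_A(Y),[Z,X]_A]_A+[\phi_A(Z),[X,Y]_A]_A=0$,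 and a bundle map $a_A:A\to\varphi^!TM$ such that $[X,fY]_A=\varphi^*(f)[X,Y]_A+a_A(\phi_A(X))(f)\phi_A(Y)$, $\varphi^*\circ a_A(X)=a_A(\phi_A(X))\circ\varphi^*$, and $a_A([X,Y]_A)\circ\varphi^*=a_A(\phi_AX)\circ a_A(Y)-a_A(\phi_AY)\circ a_A(X)$. Pseudo-Riemannian metric: a symmetric nondegenerate bilinear form $\langle\cdot,\cdot\rangle$ on $A$ with $\langle\phi_AX,\phi_AY\rangle=\varphi^*\langle X,Y\rangle$. The hom-Levi-Civita connection is the unique $\mathbb R$-bilinear $\nabla:\Gamma(A)\times\Gamma(A)\to\Gamma(A)$ with $\nabla_{fX}Y=\varphi^*(f)\nabla_XY$, $\nabla_X(fY)=\varphi^*(f)\nabla_XY+a_A(\phi_AX)(f)\phi_A(Y)$, $[X,Y]_A=\nabla_XY-\nabla_YX$, and $a_A(\phi_AX)\langle Y,Z\rangle=\langle\nabla_XY,\phi_AZ\rangle+\langle\phi_AY,\nabla_XZ\rangle$. An almost para-complex structure is an invertible map $K:\Gamma(A)\to\Gamma(A)$ with $(\phi_A\circ K)^2=\mathrm{Id}$, $\phi_A\circ K=K\circ\phi_A$, and such that $A^1=\ker(\phi_A\circ K-\mathrm{Id})$ and $A^{-1}=\ker(\phi_A\circ K+\mathrm{Id})$ have the same rank (so $A=A^1\oplus A^{-1}$). $(K,\langle\cdot,\cdot\rangle)$ is almost para-Hermitian if $\langle(\phi_A\circ K)X,(\phi_A\circ K)Y\rangle=-\langle X,Y\rangle$. A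 para-Kähler hom-Lie algebroid is an almost para-Hermitian hom-Lie algebroid with $\nabla_X\phi_A(KY)=\phi_A(K(\nabla_XY))$ for all $X,Y$, $\nabla$ the hom-Levi-Civita connection. *)

theory Defs
  imports Main "HOL.Real_Vector_Spaces"
begin

text \<open>The type 'f stands for the commutative real algebra C^infty(M),
  the type 's for the space of sections Gamma(A). The C^infty(M)-module structure on
  sections is given by sm (sm f X = f X). The map pb is the pullback varphi^*.
  Sections of the pullback bundle varphi^! TM are varphi-derivations D :: 'f => 'f.\<close>

definition real_lin_s :: "('f::{comm_ring_1,real_algebra_1} \<Rightarrow> 's::ab_group_add \<Rightarrow> 's)
    \<Rightarrow> ('s \<Rightarrow> 's) \<Rightarrow> bool" where
  "real_lin_s sm T \<longleftrightarrow> (\<forall>X Y. T (X + Y) = T X + T Y)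
     \<and> (\<forall>c X. T (sm (of_real c) X) = sm (of_real c) (T X))"

definition sections_module :: "('f::{comm_ring_1,real_algebra_1} \<Rightarrow> 's::ab_group_add \<Rightarrow> 's) \<Rightarrow> bool" where
  "sections_module sm \<longleftrightarrow>
     (\<forall>f X Y. sm f (X + Y) = sm f X + sm f Y)
   \<and> (\<forall>f g X. sm (f + g) X = sm f X + sm g X)
   \<and> (\<forall>f g X. sm (f * g) X = sm f (sm g X))
   \<and> (\<forall>X. sm 1 X = X)"

definition pullback_map :: "('f::{comm_ring_1,real_algebra_1} \<Rightarrow> 'f) \<Rightarrow> bool" where
  "pullback_map pb \<longleftrightarrow> bij pb
   \<and> (\<forall>f g. pb (f + g) = pb f + pb g)
   \<and> (\<forall>f g. pb (f * g) = pb f * pb g)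
   \<and> pb 1 = 1
   \<and> (\<forall>c f. pb (scaleR c f) = scaleR c (pb f))"

definition phi_derivation :: "('f::{comm_ring_1,real_algebra_1} \<Rightarrow> 'f) \<Rightarrow> ('f \<Rightarrow> 'f) \<Rightarrow> bool" where
  "phi_derivation pb D \<longleftrightarrow>
     (\<forall>f g. D (f + g) = D f + D g)
   \<and> (\<forall>c f. D (scaleR c f) = scaleR c (D f))
   \<and> (\<forall>f g. D (f * g) = D f * pb g + pb f * D g)"

definition hom_bundle :: "('f::{comm_ring_1,real_algebra_1} \<Rightarrow> 's::ab_group_add \<Rightarrow> 's)
    \<Rightarrow> ('f \<Rightarrow> 'f) \<Rightarrow> ('s \<Rightarrow> 's) \<Rightarrow> bool" where
  "hom_bundle sm pb phi \<longleftrightarrow> sections_module sm \<and> pullback_map pb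
   \<and> bij phi \<and> real_lin_s sm phi
   \<and> (\<forall>f X. phi (sm f X) = sm (pb f) (phi X))"

definition hom_lie_algebroid :: "('f::{comm_ring_1,real_algebra_1} \<Rightarrow> 's::ab_group_add \<Rightarrow> 's)
    \<Rightarrow> ('f \<Rightarrow> 'f) \<Rightarrow> ('s \<Rightarrow> 's) \<Rightarrow> ('s \<Rightarrow> 's \<Rightarrow> 's) \<Rightarrow> ('s \<Rightarrow> 'f \<Rightarrow> 'f) \<Rightarrow> bool" where
  "hom_lie_algebroid sm pb phi br anc \<longleftrightarrow> hom_bundle sm pb phi
   \<and> (\<forall>X. real_lin_s sm (br X)) \<and> (\<forall>Y. real_lin_s sm (\<lambda>X. br X Y))
   \<and> (\<forall>X Y. br X Y = - br Y X)
   \<and> (\<forall>X Y. phi (br X Y) = br (phi X) (phi Y))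
   \<and> (\<forall>X Y Z. br (phi X) (br Y Z) + br (phi Y) (br Z X) + br (phi Z) (br X Y) = 0)
   \<and> (\<forall>X. phi_derivation pb (anc X))
   \<and> (\<forall>X Y g. anc (X + Y) g = anc X g + anc Y g)
   \<and> (\<forall>f X g. anc (sm f X) g = f * anc X g)
   \<and> (\<forall>X f Y. br X (sm f Y) = sm (pb f) (br X Y) + sm (anc (phi X) f) (phi Y))
   \<and> (\<forall>X g. pb (anc X g) = anc (phi X) (pb g))
   \<and> (\<forall>X Y g. anc (br X Y) (pb g) = anc (phi X) (anc Y g) - anc (phi Y) (anc X g))"

definition pseudo_riemannian :: "('f::{comm_ring_1,real_algebra_1} \<Rightarrow> 's::ab_group_add \<Rightarrow> 's)
    \<Rightarrow> ('f \<Rightarrow> 'f) \<Rightarrow> ('s \<Rightarrow> 's) \<Rightarrow> ('s \<Rightarrow> 's \<Rightarrow> 'f) \<Rightarrow> bool" where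
  "pseudo_riemannian sm pb phi ip \<longleftrightarrow>
     (\<forall>X Y. ip X Y = ip Y X)
   \<and> (\<forall>X Y Z. ip (X + Y) Z = ip X Z + ip Y Z)
   \<and> (\<forall>f X Y. ip (sm f X) Y = f * ip X Y)
   \<and> (\<forall>X. (\<forall>Y. ip X Y = 0) \<longrightarrow> X = 0)
   \<and> (\<forall>X Y. ip (phi X) (phi Y) = pb (ip X Y))"

definition hom_levi_civita :: "('f::{comm_ring_1,real_algebra_1} \<Rightarrow> 's::ab_group_add \<Rightarrow> 's)
    \<Rightarrow> ('f \<Rightarrow> 'f) \<Rightarrow> ('s \<Rightarrow> 's) \<Rightarrow> ('s \<Rightarrow> 's \<Rightarrow> 's) \<Rightarrow> ('s \<Rightarrow> 'f \<Rightarrow> 'f)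
    \<Rightarrow> ('s \<Rightarrow> 's \<Rightarrow> 'f) \<Rightarrow> ('s \<Rightarrow> 's \<Rightarrow> 's) \<Rightarrow> bool" where
  "hom_levi_civita sm pb phi br anc ip nabla \<longleftrightarrow>
     (\<forall>X. real_lin_s sm (nabla X)) \<and> (\<forall>Y. real_lin_s sm (\<lambda>X. nabla X Y))
   \<and> (\<forall>f X Y. nabla (sm f X) Y = sm (pb f) (nabla X Y))
   \<and> (\<forall>X f Y. nabla X (sm f Y) = sm (pb f) (nabla X Y) + sm (anc (phi X) f) (phi Y))
   \<and> (\<forall>X Y. br X Y = nabla X Y - nabla Y X)
   \<and> (\<forall>X Y Z. anc (phi X) (ip Y Z) = ip (nabla X Y) (phi Z) + ip (phi Y) (nabla X Z))"

text \<open>Almost para-complex structure. Reading: phi o K is a bundle endomorphism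
  (additive and C^infty-linear), so that its eigen-spaces are subbundles.\<close>
definition almost_para_complex :: "('f::{comm_ring_1,real_algebra_1} \<Rightarrow> 's::ab_group_add \<Rightarrow> 's)
    \<Rightarrow> ('s \<Rightarrow> 's) \<Rightarrow> ('s \<Rightarrow> 's) \<Rightarrow> bool" where
  "almost_para_complex sm phi K \<longleftrightarrow> bij K
   \<and> (\<forall>X. phi (K (phi (K X))) = X)
   \<and> (\<forall>X. phi (K X) = K (phi X))
   \<and> (\<forall>X Y. phi (K (X + Y)) = phi (K X) + phi (K Y))
   \<and> (\<forall>f X. phi (K (sm f X)) = sm f (phi (K X)))"

definition plus_eigen :: "('s \<Rightarrow> 's) \<Rightarrow> ('s \<Rightarrow> 's) \<Rightarrow> 's set" where
  "plus_eigen phi K = {X. phi (K X) = X}"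

definition minus_eigen :: "('s::ab_group_add \<Rightarrow> 's) \<Rightarrow> ('s \<Rightarrow> 's) \<Rightarrow> 's set" where
  "minus_eigen phi K = {X. phi (K X) = - X}"

definition para_kahler :: "('f::{comm_ring_1,real_algebra_1} \<Rightarrow> 's::ab_group_add \<Rightarrow> 's)
    \<Rightarrow> ('f \<Rightarrow> 'f) \<Rightarrow> ('s \<Rightarrow> 's) \<Rightarrow> ('s \<Rightarrow> 's \<Rightarrow> 's) \<Rightarrow> ('s \<Rightarrow> 'f \<Rightarrow> 'f)
    \<Rightarrow> ('s \<Rightarrow> 's) \<Rightarrow> ('s \<Rightarrow> 's \<Rightarrow> 'f) \<Rightarrow> ('s \<Rightarrow> 's \<Rightarrow> 's) \<Rightarrow> bool" where
  "para_kahler sm pb phi br anc K ip nabla \<longleftrightarrow>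
     hom_lie_algebroid sm pb phi br anc
   \<and> pseudo_riemannian sm pb phi ip
   \<and> almost_para_complex sm phi K
   \<and> (\<forall>X Y. ip (phi (K X)) (phi (K Y)) = - ip X Y)
   \<and> hom_levi_civita sm pb phi br anc ip nabla
   \<and> (\<forall>X Y. nabla X (phi (K Y)) = phi (K (nabla X Y)))"

definition Omega :: "('s \<Rightarrow> 's) \<Rightarrow> ('s \<Rightarrow> 's) \<Rightarrow> ('s \<Rightarrow> 's \<Rightarrow> 'f) \<Rightarrow> 's \<Rightarrow> 's \<Rightarrow> 'f" where
  "Omega phi K ip X Y = ip (phi (K X)) Y"

end

theory Submission
  imports Defs
begin

text \<open>Put \<open>J = phi \<circ> K\<close>. Metric compatibility of \<open>nabla\<close> together with \<open>nabla J = J nabla\<close> turns the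
  defining identity of \<open>nabla\<^sup>a\<close> into
  \<open>Omega (nabla\<^sup>a X Y) (phi Z) = Omega (nabla X Y) (phi Z) + Omega (phi Y) (nabla Z X)\<close>,
  with \<open>Omega (phi Y) (nabla Z X) = \<langle>J (phi Y), nabla Z X\<rangle>\<close>.
  Since \<open>\<langle>J U, J V\<rangle> = - \<langle>U, V\<rangle>\<close>, both eigen-bundles of \<open>J\<close> are isotropic, and they are preserved by
  \<open>phi\<close> and by every \<open>nabla Z\<close>; so for \<open>X, Y\<close> in the same eigen-bundle the correction term vanishes
  and nondegeneracy of \<open>Omega\<close> gives \<open>nabla X Y = nabla\<^sup>a X Y\<close>.\<close>

lemma real_vector_eq_neg_iff:
  fixes a :: "'a::real_vector"
  shows "a = - a \<longleftrightarrow> a = 0"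
proof
  assume "a = - a"
  then have "scaleR 2 a = 0" by (metis add.right_inverse scaleR_2)
  then show "a = 0" by simp
qed simp

locale para_kahler_algebroid =
  fixes sm :: "'f::{comm_ring_1,real_algebra_1} \<Rightarrow> 's::ab_group_add \<Rightarrow> 's"
    and pb :: "'f \<Rightarrow> 'f" and phi :: "'s \<Rightarrow> 's" and br :: "'s \<Rightarrow> 's \<Rightarrow> 's"
    and anc :: "'s \<Rightarrow> 'f \<Rightarrow> 'f" and K :: "'s \<Rightarrow> 's" and ip :: "'s \<Rightarrow> 's \<Rightarrow> 'f"
    and nabla :: "'s \<Rightarrow> 's \<Rightarrow> 's"
  assumes para_kahler: "para_kahler sm pb phi br anc K ip nabla"
begin

lemma phi_bij: "bij phi"
  using para_kahler
  unfolding para_kahler_def hom_lie_algebroid_def hom_bundle_def by blast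

lemma phi_additive: "additive phi"
  using para_kahler
  by (simp add: additive_def para_kahler_def hom_lie_algebroid_def hom_bundle_def real_lin_s_def)

lemma phiK_additive: "additive (\<lambda>X. phi (K X))"
  using para_kahler unfolding para_kahler_def almost_para_complex_def
  by (blast intro: additive.intro)

lemma phiK_phiK: "phi (K (phi (K X))) = X"
  using para_kahler unfolding para_kahler_def almost_para_complex_def by blast

lemma phiK_phi: "phi (K (phi Y)) = phi (phi (K Y))"
  using para_kahler unfolding para_kahler_def almost_para_complex_def by metis

lemma ip_sym: "ip X Y = ip Y X"
  using para_kahler unfolding para_kahler_def pseudo_riemannian_def by blast

lemma ip_additive_left: "additive (\<lambda>X. ip X Z)"
proof
  show "ip (X + Y) Z = ip X Z + ip Y Z" for X Y
    using para_kahler unfolding para_kahler_def pseudo_riemannian_def by blast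
qed

lemma ip_additive_right: "additive (ip Z)"
  using ip_additive_left by (simp add: additive_def ip_sym[of Z])

lemma ip_nondegenerate: "(\<And>Y. ip X Y = 0) \<Longrightarrow> X = 0"
  using para_kahler unfolding para_kahler_def pseudo_riemannian_def by blast

lemma ip_phiK: "ip (phi (K X)) (phi (K Y)) = - ip X Y"
  using para_kahler unfolding para_kahler_def by blast

lemma nabla_phiK: "nabla X (phi (K Y)) = phi (K (nabla X Y))"
  using para_kahler unfolding para_kahler_def by blast

lemma nabla_additive: "additive (nabla X)"
  using para_kahler by (simp add: additive_def para_kahler_def hom_levi_civita_def real_lin_s_def)

lemma br_nabla: "br X Y = nabla X Y - nabla Y X"
  using para_kahler unfolding para_kahler_def hom_levi_civita_def by blast

lemma anc_ip_nabla: "anc (phi X) (ip Y Z) = ip (nabla X Y) (phi Z) + ip (phi Y) (nabla X Z)"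
  using para_kahler unfolding para_kahler_def hom_levi_civita_def by blast

lemma Omega_phi_cancel:
  assumes "\<And>Z. Omega phi K ip U (phi Z) = Omega phi K ip V (phi Z)"
  shows "U = V"
proof -
  have "ip (phi (K (U - V))) W = 0" for W
  proof -
    obtain Z where "W = phi Z" using phi_bij by (metis bij_pointE)
    then show ?thesis
      using assms[of Z] additive.diff[OF phiK_additive] additive.diff[OF ip_additive_left]
      by (simp add: Omega_def)
  qed
  then have "phi (K (U - V)) = 0" by (rule ip_nondegenerate)
  then have "U - V = phi (K 0)" by (metis phiK_phiK)
  then show ?thesis by (simp add: additive.zero[OF phiK_additive])
qed

lemma phi_plus_eigen: "Y \<in> plus_eigen phi K \<Longrightarrow> phi Y \<in> plus_eigen phi K"
  by (simp add: plus_eigen_def phiK_phi)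

lemma phi_minus_eigen: "Y \<in> minus_eigen phi K \<Longrightarrow> phi Y \<in> minus_eigen phi K"
  by (simp add: minus_eigen_def phiK_phi additive.minus[OF phi_additive])

lemma nabla_plus_eigen: "Y \<in> plus_eigen phi K \<Longrightarrow> nabla X Y \<in> plus_eigen phi K"
  by (simp add: plus_eigen_def flip: nabla_phiK)

lemma nabla_minus_eigen: "Y \<in> minus_eigen phi K \<Longrightarrow> nabla X Y \<in> minus_eigen phi K"
  by (simp add: minus_eigen_def flip: nabla_phiK) (simp add: additive.minus[OF nabla_additive])

lemma plus_eigen_isotropic:
  "X \<in> plus_eigen phi K \<Longrightarrow> Y \<in> plus_eigen phi K \<Longrightarrow> ip X Y = 0"
  using ip_phiK[of X Y] by (simp add: plus_eigen_def real_vector_eq_neg_iff)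

lemma minus_eigen_isotropic:
  "X \<in> minus_eigen phi K \<Longrightarrow> Y \<in> minus_eigen phi K \<Longrightarrow> ip X Y = 0"
  using ip_phiK[of X Y]
  by (simp add: minus_eigen_def real_vector_eq_neg_iff
      additive.minus[OF ip_additive_left] additive.minus[OF ip_additive_right])

end

locale para_kahler_dual_connection = para_kahler_algebroid +
  fixes nabla_a :: "'s::ab_group_add \<Rightarrow> 's \<Rightarrow> 's"
  assumes nabla_a_Omega: "Omega phi K ip (nabla_a X Y) (phi Z)
      = anc (phi X) (Omega phi K ip Y Z) - Omega phi K ip (phi Y) (br X Z)"
begin

lemma Omega_nabla_a:
  "Omega phi K ip (nabla_a X Y) (phi Z)
     = Omega phi K ip (nabla X Y) (phi Z) + Omega phi K ip (phi Y) (nabla Z X)"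
proof -
  have "anc (phi X) (Omega phi K ip Y Z)
      = Omega phi K ip (nabla X Y) (phi Z) + Omega phi K ip (phi Y) (nabla X Z)"
    by (simp add: Omega_def anc_ip_nabla nabla_phiK phiK_phi)
  moreover have "Omega phi K ip (phi Y) (br X Z)
      = Omega phi K ip (phi Y) (nabla X Z) - Omega phi K ip (phi Y) (nabla Z X)"
    by (simp add: Omega_def br_nabla additive.diff[OF ip_additive_right])
  ultimately show ?thesis by (simp add: nabla_a_Omega)
qed

lemma nabla_eq_nabla_a_if_isotropic:
  assumes "\<And>Z. ip (phi (K (phi Y))) (nabla Z X) = 0"
  shows "nabla X Y = nabla_a X Y"
  using Omega_nabla_a[of X Y] assms by (intro Omega_phi_cancel) (simp add: Omega_def)

end

theorem mainTheorem6:
  fixes sm :: "'f::{comm_ring_1,real_algebra_1} \<Rightarrow> 's::ab_group_add \<Rightarrow> 's"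
    and pb :: "'f \<Rightarrow> 'f" and phi :: "'s \<Rightarrow> 's" and br :: "'s \<Rightarrow> 's \<Rightarrow> 's"
    and anc :: "'s \<Rightarrow> 'f \<Rightarrow> 'f" and K :: "'s \<Rightarrow> 's" and ip :: "'s \<Rightarrow> 's \<Rightarrow> 'f"
    and nabla nabla_a :: "'s \<Rightarrow> 's \<Rightarrow> 's"
  assumes "para_kahler sm pb phi br anc K ip nabla"
    and "\<forall>X Y Z. Omega phi K ip (nabla_a X Y) (phi Z)
               = anc (phi X) (Omega phi K ip Y Z) - Omega phi K ip (phi Y) (br X Z)"
  shows "(\<forall>X Y. X \<in> plus_eigen phi K \<longrightarrow> Y \<in> plus_eigen phi K \<longrightarrow> nabla X Y = nabla_a X Y)
       \<and> (\<forall>X Y. X \<in> minus_eigen phi K \<longrightarrow> Y \<in> minus_eigen phi K \<longrightarrow> nabla X Y = nabla_a X Y)"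
proof -
  interpret para_kahler_dual_connection sm pb phi br anc K ip nabla nabla_a
    using assms by unfold_locales blast+
  have "nabla X Y = nabla_a X Y" if "X \<in> plus_eigen phi K" "Y \<in> plus_eigen phi K" for X Y
  proof (rule nabla_eq_nabla_a_if_isotropic)
    fix Z
    have "phi (K (phi Y)) = phi Y" using phi_plus_eigen[OF that(2)] by (simp add: plus_eigen_def)
    then show "ip (phi (K (phi Y))) (nabla Z X) = 0"
      using phi_plus_eigen nabla_plus_eigen plus_eigen_isotropic that by simp
  qed
  moreover have "nabla X Y = nabla_a X Y"
    if "X \<in> minus_eigen phi K" "Y \<in> minus_eigen phi K" for X Y
  proof (rule nabla_eq_nabla_a_if_isotropic)
    fix Z
    have "phi (K (phi Y)) = - phi Y" using phi_minus_eigen[OF that(2)] by (simp add: minus_eigen_def)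
    then show "ip (phi (K (phi Y))) (nabla Z X) = 0"
      using phi_minus_eigen nabla_minus_eigen minus_eigen_isotropic that
      by (simp add: additive.minus[OF ip_additive_left])
  qed
  ultimately show ?thesis by blast
qed

end
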